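(* Let $E_{(r_1,\dots,r_n)}^{(v_1,\dots,v_n)}$ be an $n$-induced $\mathbb{Z}$-grading on $E$. If there exist $i,j\in\{1,\dots,n\}$ such that $r_i<0<r_j$, $\gcd(r_i,r_j)=1$ and $v_i=v_j=\infty$, then $E_{(r_1,\dots,r_n)}^{(v_1,\dots,v_n)}$ is of full support (its support is $\mathbb{Z}$).
   Context: $E$ is the Grassmann algebra of an infinite-dimensional vector space $L$ with basis $e_1,e_2,\dots$ (basis $1$, $e_{i_1}\cdots e_{i_k}$ with $i_1<\dots<i_k$; $e_ie_j=-e_je_i$). For pairwise distinct integers $r_1,\dots,r_n$ and $v_1,\dots,v_n\in\mathbb{N}\cup\{\infty\}$, the $n$-induced $\mathbb{Z}$-grading $E_{(r_1,\dots,r_n)}^{(v_1,\dots,v_n)}=\bigoplus_rA_r$ is obtained by splitting $\{e_i\}$ into $n$ disjoint sets of cardinalities $v_1,\dots,v_n$, giving elements of the $j$-th set degree $r_j$ and monomials the sum of the degrees of their factors; its support is $\{r:A_r\ne0\}$. *)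

theory Defs
  imports Main "HOL-Library.Extended_Nat"
begin

text \<open>The Grassmann algebra E over a field k of the vector space L with basis
  e_0, e_1, ... (indexed by nat).  As a k-vector space, E has basis the monomials
  e_{i_1}...e_{i_m} (i_1 < ... < i_m), which we identify with finite sets of
  indices (the empty set being 1).  The multiplication plays no role
  for the support of a grading, so only the linear structure is modelled.\<close>

definition grassmann_elems :: "(nat set \<Rightarrow> 'k::zero) set" where
  "grassmann_elems = {x. finite {S. x S \<noteq> 0} \<and> (\<forall>S. x S \<noteq> 0 \<longrightarrow> finite S)}"

definition ecard :: "'a set \<Rightarrow> enat" where
  "ecard A = (if finite A then enat (card A) else \<infinity>)"

text \<open>Data of an n-induced Z-grading: the n sets are indexed by 0..<n,
  the j-th set is {i. part i = j}, of cardinality v j, and its elements get degree r j.\<close>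
definition n_induced :: "nat \<Rightarrow> (nat \<Rightarrow> int) \<Rightarrow> (nat \<Rightarrow> enat) \<Rightarrow> (nat \<Rightarrow> nat) \<Rightarrow> bool" where
  "n_induced n r v part \<longleftrightarrow>
     inj_on r {..<n} \<and> (\<forall>i. part i < n) \<and> (\<forall>j<n. ecard {i. part i = j} = v j)"

definition mono_deg :: "(nat \<Rightarrow> int) \<Rightarrow> (nat \<Rightarrow> nat) \<Rightarrow> nat set \<Rightarrow> int" where
  "mono_deg r part S = (\<Sum>i\<in>S. r (part i))"

definition induced_component :: "(nat \<Rightarrow> int) \<Rightarrow> (nat \<Rightarrow> nat) \<Rightarrow> int \<Rightarrow> (nat set \<Rightarrow> 'k::zero) set" where
  "induced_component r part d =
     {x \<in> grassmann_elems. \<forall>S. x S \<noteq> 0 \<longrightarrow> mono_deg r part S = d}"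

definition induced_support :: "'k::field itself \<Rightarrow> (nat \<Rightarrow> int) \<Rightarrow> (nat \<Rightarrow> nat) \<Rightarrow> int set" where
  "induced_support _ r part =
     {d. \<exists>x \<in> (induced_component r part d :: (nat set \<Rightarrow> 'k) set). x \<noteq> (\<lambda>_. 0)}"

end

theory Submission
  imports Defs
begin

text \<open>Every integer d is a combination a r_i + b r_j with a, b \<ge> 0, because a Bezout
  relation for r_i < 0 < r_j can be shifted by multiples of (r_j, -r_i) until both
  coefficients are nonnegative. Choosing a indices of degree r_i and b of degree r_j
  (possible since v_i = v_j = \<infinity>) yields a monomial of degree d.\<close>

lemma nonneg_combination_opposite_signs:
  fixes p q d :: int
  assumes "p < 0" "0 < q" "gcd p q dvd d"
  shows "\<exists>a b :: nat. int a * p + int b * q = d"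
proof -
  obtain u w where bezout: "u * p + w * q = gcd p q"
    using bezout_int by blast
  obtain e where e: "d = gcd p q * e"
    using assms(3) by blast
  define x y where "x = u * e" and "y = w * e"
  have xy: "x * p + y * q = d"
    unfolding x_def y_def e bezout [symmetric] by (simp add: algebra_simps)
  define t where "t = \<bar>x\<bar> + \<bar>y\<bar>"
  have "t \<ge> 0"
    unfolding t_def by simp
  have "t \<le> t * q" and "t \<le> - (t * p)"
    using mult_left_mono [of 1 q t] mult_left_mono [of 1 "- p" t] \<open>t \<ge> 0\<close> assms(1,2)
    by simp_all
  then have "x + t * q \<ge> 0" and "y - t * p \<ge> 0"
    using t_def by linarith+
  moreover have "(x + t * q) * p + (y - t * p) * q = d"
    using xy by (simp add: algebra_simps)
  ultimately have "int (nat (x + t * q)) * p + int (nat (y - t * p)) * q = d"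
    by simp
  then show ?thesis
    by blast
qed

lemma mono_deg_subset_class:
  assumes "S \<subseteq> {k. part k = c}"
  shows "mono_deg r part S = int (card S) * r c"
proof (cases "finite S")
  case True
  have "mono_deg r part S = (\<Sum>k\<in>S. r c)"
    unfolding mono_deg_def using assms by (intro sum.cong) auto
  then show ?thesis
    by simp
qed (simp add: mono_deg_def)

lemma mono_deg_Un_disjoint:
  assumes "finite S" "finite T" "S \<inter> T = {}"
  shows "mono_deg r part (S \<union> T) = mono_deg r part S + mono_deg r part T"
  unfolding mono_deg_def using assms by (rule sum.union_disjoint)

lemma mono_deg_in_induced_support:
  assumes "finite S"
  shows "mono_deg r part S \<in> induced_support TYPE('k::field) r part"
proof -
  define x :: "nat set \<Rightarrow> 'k" where "x = (\<lambda>T. if T = S then 1 else 0)"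
  have "{T. x T \<noteq> 0} = {S}"
    unfolding x_def by auto
  then have "x \<in> grassmann_elems"
    unfolding grassmann_elems_def using assms by auto
  then have "x \<in> induced_component r part (mono_deg r part S)"
    unfolding induced_component_def x_def by auto
  moreover have "x \<noteq> (\<lambda>_. 0)"
    unfolding x_def by (metis one_neq_zero)
  ultimately show ?thesis
    unfolding induced_support_def by blast
qed

lemma combination_in_induced_support:
  assumes "infinite {k. part k = c}" "infinite {k. part k = c'}" "c \<noteq> c'"
  shows "int a * r c + int b * r c' \<in> induced_support TYPE('k::field) r part"
proof -
  obtain A where A: "finite A" "card A = a" "A \<subseteq> {k. part k = c}"
    using infinite_arbitrarily_large [OF assms(1)] by blast
  obtain B where B: "finite B" "card B = b" "B \<subseteq> {k. part k = c'}"
    using infinite_arbitrarily_large [OF assms(2)] by blast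
  have "A \<inter> B = {}"
    using A(3) B(3) assms(3) by auto
  then have "mono_deg r part (A \<union> B) = int a * r c + int b * r c'"
    using A B by (simp add: mono_deg_Un_disjoint mono_deg_subset_class)
  moreover have "mono_deg r part (A \<union> B) \<in> induced_support TYPE('k) r part"
    using A(1) B(1) by (intro mono_deg_in_induced_support) simp
  ultimately show ?thesis
    by simp
qed

lemma n_induced_infinite_class:
  assumes "n_induced n r v part" "c < n" "v c = \<infinity>"
  shows "infinite {k. part k = c}"
  using assms unfolding n_induced_def ecard_def by (metis enat.distinct(1))

theorem proposition5p1:
  fixes n :: nat and r :: "nat \<Rightarrow> int" and v :: "nat \<Rightarrow> enat" and part :: "nat \<Rightarrow> nat"
    and i j :: nat
  assumes "n_induced n r v part"
    and "i < n" and "j < n"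
    and "r i < 0" and "0 < r j"
    and "gcd (r i) (r j) = 1"
    and "v i = \<infinity>" and "v j = \<infinity>"
  shows "induced_support TYPE('k::field) r part = UNIV"
proof -
  have "d \<in> induced_support TYPE('k) r part" for d
  proof -
    obtain a b :: nat where "int a * r i + int b * r j = d"
      using nonneg_combination_opposite_signs [of "r i" "r j" d] assms(4-6) by auto
    moreover have "i \<noteq> j"
      using assms(4,5) by auto
    ultimately show ?thesis
      using combination_in_induced_support n_induced_infinite_class assms(1-3,7,8) by metis
  qed
  then show ?thesis
    by blast
qed

end
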